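(* Let $(R,\mathfrak{m})$ be a commutative Artinian local ring with identity and $\mathfrak{m}\neq 0$. Every polynomial of positive degree in $R[x]$ that is not a unit of $R[x]$ can be written as a product of (finitely many) irreducible polynomials of $R[x]$.
   Context: A nonunit polynomial $f\in R[x]$ is irreducible if $f=gh$ with $g,h\in R[x]$ implies $g$ or $h$ is a unit of $R[x]$. *)

theory Defs
  imports "HOL-Computational_Algebra.Polynomial" "HOL-Computational_Algebra.Factorial_Ring"
begin

definition ring_ideal :: "'a::comm_ring_1 set \<Rightarrow> bool" where
  "ring_ideal I \<longleftrightarrow> 0 \<in> I \<and> (\<forall>x\<in>I. \<forall>y\<in>I. x + y \<in> I) \<and> (\<forall>r x. x \<in> I \<longrightarrow> r * x \<in> I)"

definition maximal_ring_ideal :: "'a::comm_ring_1 set \<Rightarrow> bool" where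
  "maximal_ring_ideal M \<longleftrightarrow> ring_ideal M \<and> M \<noteq> UNIV \<and>
     (\<forall>J. ring_ideal J \<and> M \<subseteq> J \<longrightarrow> J = M \<or> J = UNIV)"

definition artinian_ring :: "'a::comm_ring_1 itself \<Rightarrow> bool" where
  "artinian_ring _ \<longleftrightarrow> (\<forall>I :: nat \<Rightarrow> 'a set. (\<forall>n. ring_ideal (I n)) \<and> (\<forall>n. I (Suc n) \<subseteq> I n)
      \<longrightarrow> (\<exists>N. \<forall>n\<ge>N. I n = I N))"

definition local_ring :: "'a::comm_ring_1 itself \<Rightarrow> bool" where
  "local_ring _ \<longleftrightarrow> (\<exists>!M :: 'a set. maximal_ring_ideal M)"

end

theory Submission
  imports Defs
begin

text \<open>
  In an Artinian local ring the maximal ideal \<open>m\<close> is nilpotent, say \<open>m\<^sup>k = 0\<close>. Attach to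
  a nonzero polynomial \<open>f\<close> its level \<open>(j, e)\<close>: \<open>j\<close> is the largest exponent with all
  coefficients of \<open>f\<close> in \<open>m\<^sup>j\<close> (so \<open>j < k\<close>), and \<open>e\<close> is the degree of \<open>f\<close> modulo
  \<open>m\<^sup>j\<^sup>+\<^sup>1\<close>. If \<open>f = g h\<close> with \<open>h\<close> not a unit, then \<open>g\<close> has lexicographically smaller
  level: the \<open>j\<close>-components add up to at most \<open>j\<close>, and if \<open>h\<close> has \<open>j\<close>-component \<open>0\<close>, its
  leading coefficient modulo \<open>m\<close> is a unit, so the \<open>e\<close>-components add exactly; a polynomial of
  level \<open>(0, 0)\<close> is a unit plus a nilpotent, hence a unit. Well-founded induction on the
  level therefore factors every nonzero nonunit into irreducibles.
\<close>

lemma ring_ideal_zero: "ring_ideal I \<Longrightarrow> 0 \<in> I"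
  by (simp add: ring_ideal_def)

lemma ring_ideal_add: "ring_ideal I \<Longrightarrow> x \<in> I \<Longrightarrow> y \<in> I \<Longrightarrow> x + y \<in> I"
  by (simp add: ring_ideal_def)

lemma ring_ideal_mult_left: "ring_ideal I \<Longrightarrow> x \<in> I \<Longrightarrow> r * x \<in> I"
  by (simp add: ring_ideal_def)

lemma ring_ideal_mult_right: "ring_ideal I \<Longrightarrow> x \<in> I \<Longrightarrow> x * r \<in> I"
  by (metis ring_ideal_mult_left mult.commute)

lemma ring_ideal_diff: "ring_ideal I \<Longrightarrow> x \<in> I \<Longrightarrow> y \<in> I \<Longrightarrow> x - y \<in> I"
  using ring_ideal_add[of I x "(-1) * y"] ring_ideal_mult_left[of I y "-1"] by simp

lemma ring_ideal_sum: "ring_ideal I \<Longrightarrow> (\<And>i. i \<in> S \<Longrightarrow> f i \<in> I) \<Longrightarrow> sum f S \<in> I"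
  by (induction S rule: infinite_finite_induct) (auto simp: ring_ideal_zero ring_ideal_add)

lemma ring_ideal_eq_UNIV_iff: "ring_ideal I \<Longrightarrow> I = UNIV \<longleftrightarrow> 1 \<in> I"
  using ring_ideal_mult_left[of I 1] by force

lemma ring_ideal_cancel_unit: "ring_ideal I \<Longrightarrow> x * u \<in> I \<Longrightarrow> u dvd 1 \<Longrightarrow> x \<in> I"
  by (metis dvdE mult.assoc mult_1_right ring_ideal_mult_right)

lemma ring_ideal_UNIV: "ring_ideal UNIV"
  by (simp add: ring_ideal_def)

lemma ring_ideal_principal: "ring_ideal (range (\<lambda>r. r * x))"
  unfolding ring_ideal_def
  by (auto simp: distrib_right mult.assoc intro: range_eqI[of _ _ 0] range_eqI[of _ _ "_ + _"]
      range_eqI[of _ _ "_ * _"])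

lemma ring_ideal_colon:
  assumes "ring_ideal I" shows "ring_ideal {x. \<forall>y\<in>J. x * y \<in> I}"
  using assms unfolding ring_ideal_def by (simp add: distrib_right mult.assoc)

lemma ring_ideal_annihilator: "ring_ideal {x. x * a = 0}"
  using ring_ideal_colon[of "{0}" "{a}"] by (simp add: ring_ideal_def)

lemma ring_ideal_Union_chain:
  assumes "C \<noteq> {}" "chain\<^sub>\<subseteq> C" "\<And>I. I \<in> C \<Longrightarrow> ring_ideal I"
  shows "ring_ideal (\<Union>C)"
  unfolding ring_ideal_def
proof (intro conjI ballI allI impI)
  show "0 \<in> \<Union>C" using assms(1,3) ring_ideal_zero by blast
next
  fix x y assume "x \<in> \<Union>C" "y \<in> \<Union>C"
  then obtain X Y where XY: "X \<in> C" "Y \<in> C" "x \<in> X" "y \<in> Y" by auto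
  then consider "X \<subseteq> Y" | "Y \<subseteq> X" using assms(2) unfolding chain_subset_def by blast
  then show "x + y \<in> \<Union>C"
    by cases (use XY assms(3) ring_ideal_add in blast)+
next
  fix r x assume "x \<in> \<Union>C"
  then show "r * x \<in> \<Union>C" using assms(3) ring_ideal_mult_left by blast
qed

lemma maximal_ring_ideal_superset:
  fixes I :: "'a::comm_ring_1 set"
  assumes "ring_ideal I" "1 \<notin> I"
  shows "\<exists>M. maximal_ring_ideal M \<and> I \<subseteq> M"
proof -
  let ?A = "{J. ring_ideal J \<and> I \<subseteq> J \<and> 1 \<notin> J}"
  have "\<exists>U\<in>?A. \<forall>X\<in>C. X \<subseteq> U" if "C \<in> chains ?A" for C
  proof (cases "C = {}")
    case True then show ?thesis using assms by auto
  next
    case False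
    with that have "\<Union>C \<in> ?A"
      using ring_ideal_Union_chain[of C] unfolding chains_def by auto
    then show ?thesis by blast
  qed
  then obtain M where M: "M \<in> ?A" "\<forall>X\<in>?A. M \<subseteq> X \<longrightarrow> X = M"
    using Zorn_Lemma2[of ?A] by blast
  then have "maximal_ring_ideal M"
    unfolding maximal_ring_ideal_def using ring_ideal_eq_UNIV_iff by blast
  then show ?thesis using M by auto
qed

context
  fixes m :: "'a::comm_ring_1 set"
  assumes local: "local_ring TYPE('a)" and maximal: "maximal_ring_ideal m"
begin

lemma local_ring_maximal_iff_nonunit: "x \<in> m \<longleftrightarrow> \<not> x dvd 1"
proof
  assume "x \<in> m"
  with maximal show "\<not> x dvd 1"
    unfolding maximal_ring_ideal_def by (metis dvdE ring_ideal_eq_UNIV_iff ring_ideal_mult_right)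
next
  assume "\<not> x dvd 1"
  then have "1 \<notin> range (\<lambda>r. r * x)" by (metis dvd_triv_right imageE)
  then obtain M where "maximal_ring_ideal M" "range (\<lambda>r. r * x) \<subseteq> M"
    using maximal_ring_ideal_superset ring_ideal_principal by blast
  moreover have "M = m" using local maximal \<open>maximal_ring_ideal M\<close> unfolding local_ring_def by blast
  ultimately show "x \<in> m" using rangeI[of "\<lambda>r. r * x" 1] by auto
qed

lemma local_ring_one_minus_unit: "z \<in> m \<Longrightarrow> (1 - z) dvd 1"
  using maximal local_ring_maximal_iff_nonunit ring_ideal_add[of m "1 - z" z]
  unfolding maximal_ring_ideal_def by fastforce

lemma nakayama_principal:
  assumes "a = z * a" "z \<in> m" shows "a = 0"
proof -
  obtain v where v: "1 = (1 - z) * v" using local_ring_one_minus_unit[OF assms(2)] by (rule dvdE)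
  have "a = v * ((1 - z) * a)" by (metis v mult.assoc mult.commute mult_1_left)
  also have "(1 - z) * a = 0" using assms(1) by (simp add: algebra_simps)
  finally show ?thesis by simp
qed

end

lemma artinian_ring_minimal_ideal:
  fixes F :: "'a::comm_ring_1 set set"
  assumes art: "artinian_ring TYPE('a)" and "J \<in> F" and ideals: "\<And>J. J \<in> F \<Longrightarrow> ring_ideal J"
  shows "\<exists>J0\<in>F. \<forall>J\<in>F. J \<subseteq> J0 \<longrightarrow> J = J0"
proof (rule ccontr)
  assume "\<not> ?thesis"
  then have "\<forall>X\<in>F. \<exists>Y. Y \<in> F \<and> Y \<subset> X" by blast
  then obtain smaller where smaller: "\<And>X. X \<in> F \<Longrightarrow> smaller X \<in> F \<and> smaller X \<subset> X"
    by metis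
  define c where "c n = (smaller ^^ n) J" for n
  have c_in: "c n \<in> F" for n
    by (induction n) (simp_all add: c_def \<open>J \<in> F\<close> smaller)
  then have c_Suc: "c (Suc n) \<subset> c n" for n
    by (simp add: c_def smaller)
  then obtain N where "\<forall>n\<ge>N. c n = c N"
    using art c_in ideals unfolding artinian_ring_def by (metis psubset_imp_subset)
  then have "c (Suc N) = c N" by (metis le_SucI order_refl)
  then show False using c_Suc[of N] by simp
qed

lemma ring_ideal_hull: "ring_ideal (ring_ideal hull S)"
  unfolding hull_def ring_ideal_def by blast

fun ideal_pow :: "'a::comm_ring_1 set \<Rightarrow> nat \<Rightarrow> 'a set" where
  "ideal_pow m 0 = UNIV"
| "ideal_pow m (Suc j) = ring_ideal hull {a * x | a x. a \<in> m \<and> x \<in> ideal_pow m j}"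

lemma ring_ideal_ideal_pow: "ring_ideal (ideal_pow m j)"
  by (cases j) (simp_all add: ring_ideal_UNIV ring_ideal_hull)

lemma ideal_pow_Suc_le: "ideal_pow m (Suc j) \<subseteq> ideal_pow m j"
  by (induction j) (auto intro!: hull_mono)

lemma ideal_pow_antimono: "j \<le> j' \<Longrightarrow> ideal_pow m j' \<subseteq> ideal_pow m j"
  by (induction j' rule: dec_induct) (use ideal_pow_Suc_le in blast)+

lemma ideal_pow_Suc_least:
  assumes "ring_ideal I" "\<And>a x. a \<in> m \<Longrightarrow> x \<in> ideal_pow m j \<Longrightarrow> a * x \<in> I"
  shows "ideal_pow m (Suc j) \<subseteq> I"
  unfolding ideal_pow.simps by (rule hull_minimal) (use assms in auto)

lemma ideal_pow_Suc_intro: "a \<in> m \<Longrightarrow> x \<in> ideal_pow m j \<Longrightarrow> a * x \<in> ideal_pow m (Suc j)"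
  by (auto intro: hull_inc)

declare ideal_pow.simps(2) [simp del]

lemma zero_in_ideal_pow [simp]: "0 \<in> ideal_pow m j"
  by (rule ring_ideal_zero[OF ring_ideal_ideal_pow])

lemma ideal_pow_Suc_annihilator:
  assumes "\<not> ideal_pow m (Suc j) \<subseteq> {x. x * a = 0}"
  obtains y i where "y \<in> m" "i \<in> ideal_pow m j" "i * (y * a) \<noteq> 0"
proof -
  obtain y i where "y \<in> m" "i \<in> ideal_pow m j" "y * i * a \<noteq> 0"
    using assms ideal_pow_Suc_least[OF ring_ideal_annihilator] by blast
  then show thesis using that[of y i] by (simp add: ac_simps)
qed

lemma ideal_pow_1: "ring_ideal m \<Longrightarrow> ideal_pow m 1 = m"
  using ideal_pow_Suc_least[of m m 0] ideal_pow_Suc_intro[of _ m "1" 0]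
  by (fastforce simp: ring_ideal_mult_right)

lemma ideal_pow_mult: "x \<in> ideal_pow m a \<Longrightarrow> y \<in> ideal_pow m b \<Longrightarrow> x * y \<in> ideal_pow m (a + b)"
proof (induction a arbitrary: x y)
  case 0
  then show ?case by (simp add: ring_ideal_mult_left ring_ideal_ideal_pow)
next
  case (Suc a)
  have "c * z * y \<in> ideal_pow m (Suc a + b)"
    if "c \<in> m" "z \<in> ideal_pow m a" "y \<in> ideal_pow m b" for c z y
    using that Suc.IH[of z y] ideal_pow_Suc_intro[of c m "z * y"] by (simp add: mult.assoc)
  then have "ideal_pow m (Suc a) \<subseteq> {x. \<forall>y\<in>ideal_pow m b. x * y \<in> ideal_pow m (Suc a + b)}"
    by (intro ideal_pow_Suc_least ring_ideal_colon ring_ideal_ideal_pow) auto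
  then show ?case using Suc.prems by blast
qed

lemma artinian_ideal_pow_stable:
  assumes "artinian_ring TYPE('a::comm_ring_1)"
  shows "\<exists>N. ideal_pow (m :: 'a set) (Suc N) = ideal_pow m N"
proof -
  obtain N where "\<forall>n\<ge>N. ideal_pow m n = ideal_pow m N"
    using assms ring_ideal_ideal_pow ideal_pow_Suc_le unfolding artinian_ring_def
    by (metis (no_types, lifting))
  then show ?thesis by (metis le_SucI order_refl)
qed

lemma artinian_local_maximal_ideal_nilpotent:
  fixes m :: "'a::comm_ring_1 set"
  assumes art: "artinian_ring TYPE('a)" and local: "local_ring TYPE('a)"
    and maximal: "maximal_ring_ideal m"
  shows "\<exists>k. ideal_pow m k = {0}"
proof -
  obtain N where stable: "ideal_pow m (Suc N) = ideal_pow m N"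
    using artinian_ideal_pow_stable[OF art] by blast
  let ?P = "ideal_pow m N"
  have "?P = {0}"
  proof (rule ccontr)
    assume "?P \<noteq> {0}"
    then obtain i0 where "i0 \<in> ?P" "i0 \<noteq> 0"
      using zero_in_ideal_pow by blast
    define F where "F = {J. ring_ideal J \<and> (\<exists>i\<in>?P. \<exists>a\<in>J. i * a \<noteq> 0)}"
    have "i0 * 1 \<noteq> 0" using \<open>i0 \<noteq> 0\<close> by simp
    then have "UNIV \<in> F" unfolding F_def using \<open>i0 \<in> ?P\<close> ring_ideal_UNIV by blast
    then have "\<exists>J0\<in>F. \<forall>J\<in>F. J \<subseteq> J0 \<longrightarrow> J = J0"
      by (rule artinian_ring_minimal_ideal[OF art]) (simp add: F_def)
    then obtain J0 where J0: "J0 \<in> F" "\<forall>J\<in>F. J \<subseteq> J0 \<longrightarrow> J = J0" by blast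
    then obtain i a where ia: "i \<in> ?P" "a \<in> J0" "i * a \<noteq> 0" and "ring_ideal J0"
      by (auto simp: F_def)
    \<comment> \<open>As \<open>?P = m \<cdot> ?P\<close>, some \<open>y \<cdot> a\<close> with \<open>y \<in> m\<close> is still not annihilated by \<open>?P\<close>.\<close>
    have "\<not> ideal_pow m (Suc N) \<subseteq> {x. x * a = 0}" using ia stable by auto
    then obtain y i' where y: "y \<in> m" "i' \<in> ?P" "i' * (y * a) \<noteq> 0"
      by (rule ideal_pow_Suc_annihilator)
    let ?K = "range (\<lambda>r. r * (y * a))"
    have "y * a \<in> ?K" using rangeI[of "\<lambda>r. r * (y * a)" 1] by simp
    with y have "?K \<in> F" using ring_ideal_principal unfolding F_def by blast
    moreover have "?K \<subseteq> J0"
      using ring_ideal_mult_left[OF \<open>ring_ideal J0\<close> ia(2)] by (auto simp flip: mult.assoc)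
    ultimately have "a \<in> ?K" using J0(2) ia(2) by blast
    then obtain r where "a = r * (y * a)" by blast
    then have "a = (r * y) * a" by (simp add: mult.assoc)
    moreover have "r * y \<in> m"
      using maximal y(1) ring_ideal_mult_left unfolding maximal_ring_ideal_def by blast
    ultimately have "a = 0" using nakayama_principal[OF local maximal] by blast
    then show False using ia by simp
  qed
  then show ?thesis by blast
qed

lemma unit_add_nilpotent:
  fixes u n :: "'a::comm_ring_1"
  assumes "u dvd 1" "n ^ k = 0"
  shows "(u + n) dvd 1"
proof -
  obtain v where v: "1 = u * v" using assms(1) by (rule dvdE)
  define w where "w = (- v) * n"
  have "w ^ k = 0" by (simp only: w_def power_mult_distrib assms(2) mult_zero_right)
  then have "(1 - w) * (\<Sum>i<k. w ^ i) = 1" using one_diff_power_eq[of w k] by simp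
  then have unit: "(1 - w) dvd 1" by (rule dvdI[OF sym])
  have "u * (1 - w) = u + (u * v) * n" by (simp add: w_def algebra_simps)
  also have "\<dots> = u + n" by (simp flip: v)
  finally have "u + n = u * (1 - w)" ..
  then show ?thesis using mult_dvd_mono[OF assms(1) unit] by simp
qed

definition coeffs_in_pow :: "'a::comm_ring_1 set \<Rightarrow> nat \<Rightarrow> 'a poly \<Rightarrow> bool" where
  "coeffs_in_pow m j f \<longleftrightarrow> (\<forall>i. coeff f i \<in> ideal_pow m j)"

lemma coeffs_in_pow_antimono: "j \<le> j' \<Longrightarrow> coeffs_in_pow m j' f \<Longrightarrow> coeffs_in_pow m j f"
  unfolding coeffs_in_pow_def using ideal_pow_antimono by blast

lemma coeffs_in_pow_mult:
  "coeffs_in_pow m a g \<Longrightarrow> coeffs_in_pow m b h \<Longrightarrow> coeffs_in_pow m (a + b) (g * h)"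
  unfolding coeffs_in_pow_def coeff_mult
  by (auto intro!: ring_ideal_sum[OF ring_ideal_ideal_pow] ideal_pow_mult)

lemma coeffs_in_pow_power: "coeffs_in_pow m 1 f \<Longrightarrow> coeffs_in_pow m n (f ^ n)"
proof (induction n)
  case 0
  then show ?case by (simp add: coeffs_in_pow_def)
next
  case (Suc n)
  then show ?case using coeffs_in_pow_mult[of m 1 f n "f ^ n"] by simp
qed

definition poly_level :: "'a::comm_ring_1 set \<Rightarrow> 'a poly \<Rightarrow> nat \<Rightarrow> nat \<Rightarrow> bool" where
  "poly_level m f j e \<longleftrightarrow> coeffs_in_pow m j f \<and> coeff f e \<notin> ideal_pow m (Suc j)
     \<and> (\<forall>i>e. coeff f i \<in> ideal_pow m (Suc j))"

lemma poly_level_unique: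
  assumes "poly_level m f j e" "poly_level m f j' e'"
  shows "j = j'" "e = e'"
proof -
  show "j = j'"
  proof (rule ccontr)
    assume "j \<noteq> j'"
    then have "Suc j \<le> j' \<or> Suc j' \<le> j" by linarith
    then show False
      using assms coeffs_in_pow_antimono unfolding poly_level_def coeffs_in_pow_def by blast
  qed
  then show "e = e'"
    using assms unfolding poly_level_def by (metis linorder_neqE_nat)
qed

lemma poly_level_mult_unit_coeff:
  assumes "ring_ideal m" "poly_level m g a p" "poly_level m h 0 q" "coeff h q dvd 1"
  shows "poly_level m (g * h) a (p + q)"
proof -
  have high: "coeff g i * coeff h (n - i) \<in> ideal_pow m (Suc a)" if "i > p \<or> n - i > q" for i n
    using that
  proof
    assume "i > p"
    then show ?thesis
      using assms(2) ideal_pow_mult[of "coeff g i" m "Suc a" "coeff h (n - i)" 0]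
      unfolding poly_level_def by simp
  next
    assume "n - i > q"
    then show ?thesis
      using assms(2,3) ideal_pow_mult[of "coeff g i" m a "coeff h (n - i)" 1]
      unfolding poly_level_def coeffs_in_pow_def by simp
  qed
  define rest where "rest = (\<Sum>i\<in>{..p + q} - {p}. coeff g i * coeff h (p + q - i))"
  have "coeff (g * h) (p + q) = coeff g p * coeff h q + rest"
    unfolding coeff_mult rest_def by (subst sum.remove[of _ p]) auto
  moreover have "rest \<in> ideal_pow m (Suc a)"
    unfolding rest_def by (rule ring_ideal_sum[OF ring_ideal_ideal_pow], rule high) auto
  moreover have "coeff g p * coeff h q \<notin> ideal_pow m (Suc a)"
    using assms(2) ring_ideal_cancel_unit[OF ring_ideal_ideal_pow _ assms(4)]
    unfolding poly_level_def by blast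
  ultimately have "coeff (g * h) (p + q) \<notin> ideal_pow m (Suc a)"
    using ring_ideal_diff[OF ring_ideal_ideal_pow, of "coeff (g * h) (p + q)" m "Suc a" rest]
    by auto
  moreover have "coeff (g * h) n \<in> ideal_pow m (Suc a)" if "n > p + q" for n
    unfolding coeff_mult
    by (rule ring_ideal_sum[OF ring_ideal_ideal_pow], rule high) (use that in auto)
  moreover have "coeffs_in_pow m a (g * h)"
    using assms(2,3) coeffs_in_pow_mult[of m a g 0 h] unfolding poly_level_def by simp
  ultimately show ?thesis unfolding poly_level_def by blast
qed

lemma poly_level_nonzero: "poly_level m f j e \<Longrightarrow> f \<noteq> 0"
  unfolding poly_level_def by auto

locale nilpotent_maximal_ideal =
  fixes m :: "'a::comm_ring_1 set" and k :: nat
  assumes ideal: "ring_ideal m"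
    and nilpotent: "ideal_pow m k = {0}"
    and unit_outside: "x \<notin> m \<Longrightarrow> x dvd 1"
begin

lemma coeffs_in_pow_imp_less: "coeffs_in_pow m j f \<Longrightarrow> f \<noteq> 0 \<Longrightarrow> j < k"
  using coeffs_in_pow_antimono[of k j m f] nilpotent
  unfolding coeffs_in_pow_def by (auto simp: poly_eq_iff)

lemma poly_level_exists:
  assumes "f \<noteq> 0" shows "\<exists>j e. poly_level m f j e"
proof -
  let ?P = "\<lambda>j. coeffs_in_pow m j f"
  define j where "j = (GREATEST j. ?P j)"
  have bound: "\<And>j. ?P j \<Longrightarrow> j \<le> k"
    using coeffs_in_pow_imp_less assms less_imp_le by blast
  have "?P 0" by (simp add: coeffs_in_pow_def)
  then have j: "?P j" unfolding j_def by (rule GreatestI_nat[OF _ bound])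
  have not_Suc_j: "\<not> ?P (Suc j)"
  proof
    assume "?P (Suc j)"
    then have "Suc j \<le> j" unfolding j_def by (rule Greatest_le_nat[OF _ bound])
    then show False by simp
  qed
  define S where "S = {i. coeff f i \<notin> ideal_pow m (Suc j)}"
  have "S \<subseteq> {..degree f}"
    unfolding S_def by (auto intro!: le_degree)
  then have "finite S" by (rule finite_subset) simp
  moreover have "S \<noteq> {}" using not_Suc_j unfolding S_def coeffs_in_pow_def by blast
  ultimately have "poly_level m f j (Max S)"
    unfolding poly_level_def using j Max_in Max_less_iff by (fastforce simp: S_def)
  then show ?thesis by blast
qed

lemma poly_level_0_0_unit:
  assumes "poly_level m h 0 0" shows "h dvd 1"
proof -
  define n where "n = h - [:coeff h 0:]"
  have "coeffs_in_pow m 1 n"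
    using assms unfolding coeffs_in_pow_def poly_level_def n_def
    by (auto simp: coeff_pCons split: nat.split)
  then have "n ^ k = 0"
    using coeffs_in_pow_power coeffs_in_pow_imp_less by blast
  moreover have "[:coeff h 0:] dvd 1"
  proof -
    have "coeff h 0 \<notin> m"
      using assms ideal_pow_1[OF ideal] unfolding poly_level_def by simp
    then obtain v where "1 = coeff h 0 * v" using unit_outside by (blast elim: dvdE)
    then have "[:coeff h 0:] * [:v:] = 1" by (simp add: one_pCons mult.commute)
    then show ?thesis by (rule dvdI[OF sym])
  qed
  ultimately have "([:coeff h 0:] + n) dvd 1" by (rule unit_add_nilpotent[rotated])
  then show ?thesis by (simp add: n_def)
qed

lemma poly_level_factor_less:
  assumes f: "poly_level m f j e" and "f = g * h" "\<not> h dvd 1" and g: "poly_level m g a p"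
  shows "a < j \<or> a = j \<and> p < e"
proof -
  have "h \<noteq> 0" using poly_level_nonzero[OF f] \<open>f = g * h\<close> by auto
  then obtain b q where h: "poly_level m h b q" using poly_level_exists by blast
  have "a + b \<le> j"
  proof (rule ccontr)
    assume "\<not> a + b \<le> j"
    moreover have "coeffs_in_pow m (a + b) f"
      using g h coeffs_in_pow_mult \<open>f = g * h\<close> unfolding poly_level_def by blast
    ultimately have "coeffs_in_pow m (Suc j) f"
      using coeffs_in_pow_antimono[of "Suc j" "a + b" m f] by simp
    then show False using f unfolding poly_level_def coeffs_in_pow_def by blast
  qed
  show ?thesis
  proof (cases "b = 0")
    case True
    have "coeff h q \<notin> m" using h True ideal_pow_1[OF ideal] unfolding poly_level_def by simp
    then have "poly_level m f a (p + q)"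
      using poly_level_mult_unit_coeff[OF ideal g] h True unit_outside \<open>f = g * h\<close> by simp
    then have "a = j" "e = p + q" using poly_level_unique f by blast+
    moreover have "q \<noteq> 0"
    proof
      assume "q = 0"
      with h True have "h dvd 1" by (simp add: poly_level_0_0_unit)
      with \<open>\<not> h dvd 1\<close> show False ..
    qed
    ultimately show ?thesis by simp
  next
    case False
    then show ?thesis using \<open>a + b \<le> j\<close> by simp
  qed
qed

lemma irreducible_factorization_of_level:
  assumes "poly_level m f j e" "\<not> f dvd 1"
  shows "\<exists>fs. (\<forall>g\<in>set fs. irreducible g) \<and> f = prod_list fs"
  using assms
proof (induction "(j, e)" arbitrary: f j e
    rule: wf_induct_rule[OF wf_lex_prod[OF wf_less_than wf_less_than]])
  case (1 j e f)
  show ?case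
  proof (cases "irreducible f")
    case True
    then show ?thesis by (intro exI[of _ "[f]"]) simp
  next
    case False
    with "1.prems" poly_level_nonzero obtain g h where gh: "f = g * h" "\<not> g dvd 1" "\<not> h dvd 1"
      unfolding irreducible_def by blast
    then have "g \<noteq> 0" "h \<noteq> 0" using poly_level_nonzero[OF "1.prems"(1)] by auto
    then obtain a p b q where g: "poly_level m g a p" and h: "poly_level m h b q"
      using poly_level_exists by blast
    have "f = h * g" using gh(1) by (simp add: mult.commute)
    have "a < j \<or> a = j \<and> p < e" by (rule poly_level_factor_less[OF "1.prems"(1) gh(1,3) g])
    then obtain gs where gs: "\<forall>x\<in>set gs. irreducible x" "g = prod_list gs"
      using "1.hyps"[of a p g] g gh(2) by auto
    have "b < j \<or> b = j \<and> q < e"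
      by (rule poly_level_factor_less[OF "1.prems"(1) \<open>f = h * g\<close> gh(2) h])
    then obtain hs where hs: "\<forall>x\<in>set hs. irreducible x" "h = prod_list hs"
      using "1.hyps"[of b q h] h gh(3) by auto
    show ?thesis using gh gs hs by (intro exI[of _ "gs @ hs"]) auto
  qed
qed

end

theorem proposition3p1:
  fixes m :: "'a::comm_ring_1 set" and f :: "'a poly"
  assumes "artinian_ring TYPE('a)"
    and "local_ring TYPE('a)"
    and "maximal_ring_ideal m"
    and "m \<noteq> {0}"
    and "degree f > 0"
    and "\<not> f dvd 1"
  shows "\<exists>fs :: 'a poly list. (\<forall>g\<in>set fs. irreducible g) \<and> f = prod_list fs"
proof -
  obtain k where "ideal_pow m k = {0}"
    using artinian_local_maximal_ideal_nilpotent[OF assms(1-3)] by blast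
  then interpret nilpotent_maximal_ideal m k
    using assms(3) local_ring_maximal_iff_nonunit[OF assms(2,3)]
    by unfold_locales (auto simp: maximal_ring_ideal_def)
  \<comment> \<open>Positive degree only serves to exclude \<open>f = 0\<close>.\<close>
  have "f \<noteq> 0" using assms(5) by auto
  then obtain j e where "poly_level m f j e" using poly_level_exists by blast
  then show ?thesis using irreducible_factorization_of_level assms(6) by blast
qed

end
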